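(* Fix $b\in\mathbb{N}$. A given $b$-pattern $P$ is realizable in $L=\mathbb{N}\times\mathbb{N}$ if and only if, for every prime $p$, the set of circles of $P$ does not contain a complete rectangle modulo $(p,p^b)$.
   Context: $\mathbb{N}=\{1,2,3,\dots\}$, $L=\mathbb{N}\times\mathbb{N}$. For $r,s\in\mathbb{N}$, $\gcd_b(r,s)=\max\{k\in\mathbb{N} : k\mid r \text{ and } k^b\mid s\}$; a point $(r,s)\in L$ is $b$-visible if $\gcd_b(r,s)=1$ and $b$-invisible otherwise. A $b$-pattern $P$ is obtained by choosing a positive integer $w$ and assigning to each $(r,s)\in L$ with $1\le r\le w$, $1\le s\le w^b$ either a cross, a circle, or neither. $P$ is realizable in $L$ if there is $(u,v)\in L$ such that $(u+r,v+s)$ is $b$-visible for every circle $(r,s)$ of $P$ and $(u+r,v+s)$ is $b$-invisible for every cross $(r,s)$ of $P$. For a positive integer $m$, a complete rectangle modulo $(m,m^b)$ is a collection of $m^{b+1}$ points of $L$ containing a complete system of residues of $\mathbb{Z}/m\mathbb{Z}\times\mathbb{Z}/m^b\mathbb{Z}$ (i.e. whose images under $(x,y)\mapsto(x \bmod m, y\bmod m^b)$ are all of $\mathbb{Z}/m\mathbb{Z}\times\mathbb{Z}/m^b\mathbb{Z}$). *)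

theory Defs
  imports "HOL-Computational_Algebra.Primes"
begin

definition Lat :: "(nat \<times> nat) set" where
  "Lat = {(r, s). 1 \<le> r \<and> 1 \<le> s}"

definition gcd_b :: "nat \<Rightarrow> nat \<Rightarrow> nat \<Rightarrow> nat" where
  "gcd_b b r s = Max {k. 1 \<le> k \<and> k dvd r \<and> k ^ b dvd s}"

definition b_visible :: "nat \<Rightarrow> nat \<times> nat \<Rightarrow> bool" where
  "b_visible b x = (gcd_b b (fst x) (snd x) = 1)"

definition b_invisible :: "nat \<Rightarrow> nat \<times> nat \<Rightarrow> bool" where
  "b_invisible b x = (\<not> b_visible b x)"

datatype mark = Cross | Circle

text \<open>A b-pattern of width w: an assignment of cross / circle / neither (None)
  to the points (r,s) with 1 <= r <= w, 1 <= s <= w^b (None outside this box).\<close>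
definition is_b_pattern :: "nat \<Rightarrow> nat \<Rightarrow> (nat \<times> nat \<Rightarrow> mark option) \<Rightarrow> bool" where
  "is_b_pattern b w P = (1 \<le> w \<and>
     (\<forall>r s. P (r, s) \<noteq> None \<longrightarrow> 1 \<le> r \<and> r \<le> w \<and> 1 \<le> s \<and> s \<le> w ^ b))"

definition circles :: "(nat \<times> nat \<Rightarrow> mark option) \<Rightarrow> (nat \<times> nat) set" where
  "circles P = {x. P x = Some Circle}"

definition crosses :: "(nat \<times> nat \<Rightarrow> mark option) \<Rightarrow> (nat \<times> nat) set" where
  "crosses P = {x. P x = Some Cross}"

definition realizable :: "nat \<Rightarrow> (nat \<times> nat \<Rightarrow> mark option) \<Rightarrow> bool" where
  "realizable b P = (\<exists>u v. (u, v) \<in> Lat \<and>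
     (\<forall>(r, s) \<in> circles P. b_visible b (u + r, v + s)) \<and>
     (\<forall>(r, s) \<in> crosses P. b_invisible b (u + r, v + s)))"

definition complete_rectangle :: "nat \<Rightarrow> nat \<Rightarrow> (nat \<times> nat) set \<Rightarrow> bool" where
  "complete_rectangle b m S = (S \<subseteq> Lat \<and> finite S \<and> card S = m ^ (b + 1) \<and>
     (\<lambda>(x, y). (x mod m, y mod m ^ b)) ` S = {0..<m} \<times> {0..<m ^ b})"

end

(* The shift (u, v) is built by the Chinese remainder theorem.
   Necessity: if the circles meet every class modulo (p, p^b), some circle lies in the
   class of (-u, -v), and then p divides gcd_b of the shifted point.
   Sufficiency: every cross x gets a private prime q > w with q | u + x1 and q^b | v + x2;
   every prime p <= w sends (-u, -v) to a class missed by the circles; every other prime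
   p <= u + w gets p^b | v, which a shifted circle (r, s) cannot use since s <= w^b < p^b.
   A prime witnessing the invisibility of a shifted circle is at most u + w, so it is of
   one of these kinds, and each kind is excluded (a private prime would force the circle
   to be its cross). *)
theory Submission
  imports Defs "HOL-Number_Theory.Number_Theory"
begin

definition residue_pair :: "nat \<Rightarrow> nat \<Rightarrow> nat \<times> nat \<Rightarrow> nat \<times> nat" where
  "residue_pair b m = (\<lambda>(x, y). (x mod m, y mod m ^ b))"

lemma residue_pair_Pair [simp]: "residue_pair b m (x, y) = (x mod m, y mod m ^ b)"
  by (simp add: residue_pair_def)

definition covers_residues :: "nat \<Rightarrow> nat \<Rightarrow> (nat \<times> nat) set \<Rightarrow> bool" where
  "covers_residues b m A \<longleftrightarrow> {0..<m} \<times> {0..<m ^ b} \<subseteq> residue_pair b m ` A"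

lemma ex_complete_rectangle_iff_covers_residues:
  assumes "A \<subseteq> Lat"
  shows "(\<exists>S. S \<subseteq> A \<and> complete_rectangle b m S) \<longleftrightarrow> covers_residues b m A"
proof
  assume "\<exists>S. S \<subseteq> A \<and> complete_rectangle b m S"
  then obtain S where "S \<subseteq> A" "complete_rectangle b m S"
    by blast
  then have "{0..<m} \<times> {0..<m ^ b} = residue_pair b m ` S"
    by (simp add: complete_rectangle_def residue_pair_def)
  also have "\<dots> \<subseteq> residue_pair b m ` A"
    using \<open>S \<subseteq> A\<close> by (rule image_mono)
  finally show "covers_residues b m A"
    unfolding covers_residues_def .
next
  define B where "B = {0..<m} \<times> {0..<m ^ b}"
  assume "covers_residues b m A"
  then have "z \<in> residue_pair b m ` A" if "z \<in> B" for z
    using that unfolding covers_residues_def B_def by (rule subsetD)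
  then have "\<forall>z\<in>B. \<exists>x. x \<in> A \<and> residue_pair b m x = z"
    by blast
  from bchoice[OF this] obtain g where g: "\<forall>z\<in>B. g z \<in> A \<and> residue_pair b m (g z) = z"
    by blast
  have "inj_on g B"
  proof (rule inj_onI)
    fix z z'
    assume "z \<in> B" "z' \<in> B" "g z = g z'"
    then show "z = z'"
      using g by metis
  qed
  then have "card (g ` B) = m ^ (b + 1)"
    by (simp add: card_image B_def)
  moreover have "residue_pair b m ` g ` B = B"
  proof
    show "residue_pair b m ` g ` B \<subseteq> B"
      using g by (simp add: image_subset_iff)
    show "B \<subseteq> residue_pair b m ` g ` B"
    proof
      fix z
      assume "z \<in> B"
      then have "z = residue_pair b m (g z)"
        using g by simp
      with \<open>z \<in> B\<close> show "z \<in> residue_pair b m ` g ` B"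
        by blast
    qed
  qed
  moreover have "g ` B \<subseteq> A"
    using g by blast
  moreover have "finite (g ` B)"
    by (simp add: B_def)
  ultimately have "complete_rectangle b m (g ` B)"
    using assms by (simp add: complete_rectangle_def residue_pair_def B_def)
  with \<open>g ` B \<subseteq> A\<close> show "\<exists>S. S \<subseteq> A \<and> complete_rectangle b m S"
    by blast
qed

lemma b_invisible_iff_prime_dvd:
  assumes "0 < r"
  shows "b_invisible b (r, s) \<longleftrightarrow> (\<exists>p. prime p \<and> p dvd r \<and> p ^ b dvd s)"
proof -
  define K where "K = {k. 1 \<le> k \<and> k dvd r \<and> k ^ b dvd s}"
  have "K \<subseteq> {..r}"
    using assms by (auto simp: K_def dest: dvd_imp_le)
  then have "finite K"
    by (rule finite_subset) simp
  have "1 \<in> K"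
    by (simp add: K_def)
  have gcd_b: "gcd_b b r s = Max K"
    by (simp add: gcd_b_def K_def)
  show ?thesis
  proof
    assume "b_invisible b (r, s)"
    then have "Max K \<noteq> 1"
      by (simp add: b_invisible_def b_visible_def gcd_b)
    then obtain p where "prime p" "p dvd Max K"
      using prime_factor_nat by blast
    moreover have "Max K \<in> K"
      using Max_in[OF \<open>finite K\<close>] \<open>1 \<in> K\<close> by blast
    then have "Max K dvd r" "Max K ^ b dvd s"
      by (simp_all add: K_def)
    ultimately show "\<exists>p. prime p \<and> p dvd r \<and> p ^ b dvd s"
      by (meson dvd_power_same dvd_trans)
  next
    assume "\<exists>p. prime p \<and> p dvd r \<and> p ^ b dvd s"
    then obtain p where "prime p" "p dvd r" "p ^ b dvd s"
      by blast
    then have "p \<in> K"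
      by (simp add: K_def prime_gt_0_nat Suc_le_eq)
    then have "1 < Max K"
      using Max_ge[OF \<open>finite K\<close> \<open>p \<in> K\<close>] prime_gt_1_nat[OF \<open>prime p\<close>] by linarith
    then show "b_invisible b (r, s)"
      by (simp add: b_invisible_def b_visible_def gcd_b)
  qed
qed

(* (m - 1) * u represents -u modulo m while avoiding truncated subtraction. *)
lemma dvd_add_if_cong_minus:
  fixes m u r :: nat
  assumes "0 < m" and "[r = (m - 1) * u] (mod m)"
  shows "m dvd u + r"
proof -
  have "[u + r = u + (m - 1) * u] (mod m)"
    using assms(2) by (simp add: cong_add_lcancel_nat)
  moreover have "u + (m - 1) * u = m * u"
    using assms(1) by (cases m) simp_all
  moreover have "[m * u = 0] (mod m)"
    by (simp add: cong_0_iff)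
  ultimately show ?thesis
    by (metis cong_0_iff cong_trans)
qed

lemma mod_eq_if_dvd_add:
  fixes m u r r' :: nat
  assumes "m dvd u + r" and "m dvd u + r'"
  shows "r mod m = r' mod m"
proof -
  have "[u + r = u + r'] (mod m)"
    using assms by (simp add: cong_def dvd_eq_mod_eq_0)
  then have "[r = r'] (mod m)"
    by (simp only: cong_add_lcancel_nat)
  then show ?thesis
    by (simp add: cong_def)
qed

lemma chinese_remainder_prime_powers:
  fixes Q :: "nat set" and \<alpha> :: "nat \<Rightarrow> nat"
  assumes "finite Q" and "\<And>p. p \<in> Q \<Longrightarrow> prime p"
  shows "\<exists>u\<ge>1. \<forall>p\<in>Q. p ^ e dvd u + \<alpha> p"
proof -
  have "\<forall>p\<in>Q. \<forall>p'\<in>Q. p \<noteq> p' \<longrightarrow> coprime (p ^ e) (p' ^ e)"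
    using assms(2) by (simp add: primes_coprime)
  then obtain x where x: "\<forall>p\<in>Q. [x = (p ^ e - 1) * \<alpha> p] (mod p ^ e)"
    using chinese_remainder_nat[where m = "\<lambda>p. p ^ e" and u = "\<lambda>p. (p ^ e - 1) * \<alpha> p", OF assms(1)]
    by blast
  define M where "M = (\<Prod>p\<in>Q. p ^ e)"
  have "0 < M"
    using assms prime_gt_0_nat by (simp add: M_def prod_pos)
  have "p ^ e dvd x + M + \<alpha> p" if "p \<in> Q" for p
  proof -
    have "p ^ e dvd M"
      using assms(1) that by (simp add: M_def dvd_prod_eqI)
    then have "[x + M = x + 0] (mod p ^ e)"
      by (intro cong_add cong_refl) (simp add: cong_0_iff)
    then have "[x + M = (p ^ e - 1) * \<alpha> p] (mod p ^ e)"
      using cong_trans bspec[OF x that] by simp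
    moreover have "0 < p ^ e"
      using assms(2) that prime_gt_0_nat by simp
    ultimately have "p ^ e dvd \<alpha> p + (x + M)"
      by (intro dvd_add_if_cong_minus)
    then show ?thesis
      by (simp add: ac_simps)
  qed
  with \<open>0 < M\<close> show ?thesis
    by (intro exI[of _ "x + M"]) simp
qed

lemma finite_inj_into_infinite:
  assumes "finite A" and "infinite B"
  shows "\<exists>f. f ` A \<subseteq> B \<and> inj_on f A"
proof -
  obtain C where "finite C" "card C = card A" "C \<subseteq> B"
    using infinite_arbitrarily_large[OF assms(2)] by blast
  moreover obtain f where "f ` A \<subseteq> C" "inj_on f A"
    using card_le_inj[OF assms(1) \<open>finite C\<close>] \<open>card C = card A\<close> by auto
  ultimately show ?thesis
    by blast
qed

lemma pattern_marks_subset_box: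
  assumes "is_b_pattern b w P"
  shows "circles P \<union> crosses P \<subseteq> {1..w} \<times> {1..w ^ b}"
proof
  fix x
  assume "x \<in> circles P \<union> crosses P"
  then have "P x \<noteq> None"
    by (auto simp: circles_def crosses_def)
  then show "x \<in> {1..w} \<times> {1..w ^ b}"
    using assms by (cases x) (simp add: is_b_pattern_def)
qed

lemma residue_pair_eq_if_dvd_add:
  assumes "p dvd u + r" and "p dvd u + r'" and "p ^ b dvd v + s" and "p ^ b dvd v + s'"
  shows "residue_pair b p (r, s) = residue_pair b p (r', s')"
  using mod_eq_if_dvd_add[OF assms(1,2)] mod_eq_if_dvd_add[OF assms(3,4)] by simp

lemma inj_on_residue_pair:
  assumes "1 \<le> b" and "w < p"
  shows "inj_on (residue_pair b p) ({..w} \<times> {..w ^ b})"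
proof (rule inj_onI)
  fix x y
  assume "x \<in> {..w} \<times> {..w ^ b}" "y \<in> {..w} \<times> {..w ^ b}"
    and "residue_pair b p x = residue_pair b p y"
  moreover have "w ^ b < p ^ b"
    using assms by (simp add: power_strict_mono)
  ultimately show "x = y"
    using \<open>w < p\<close> by (cases x, cases y) simp
qed

lemma ex_shift_solving_congruences:
  fixes X :: "(nat \<times> nat) set" and q :: "nat \<times> nat \<Rightarrow> nat" and z :: "nat \<Rightarrow> nat \<times> nat"
  assumes "finite X" and "inj_on q X" and q: "\<And>x. x \<in> X \<Longrightarrow> prime (q x) \<and> w < q x"
  obtains u v where "1 \<le> u" and "1 \<le> v"
    and "\<And>x. x \<in> X \<Longrightarrow> q x dvd u + fst x \<and> q x ^ b dvd v + snd x"
    and "\<And>p. prime p \<Longrightarrow> p \<le> w \<Longrightarrow> p dvd u + fst (z p) \<and> p ^ b dvd v + snd (z p)"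
    and "\<And>p. prime p \<Longrightarrow> w < p \<Longrightarrow> p \<le> u + w \<Longrightarrow> p \<notin> q ` X \<Longrightarrow> p ^ b dvd v"
proof -
  define cross where "cross = inv_into X q"
  define Q where "Q n = {p. prime p \<and> p \<le> n} \<union> q ` X" for n
  have Q: "finite (Q n)" "\<And>p. p \<in> Q n \<Longrightarrow> prime p" for n
    using assms by (auto simp: Q_def)
  have "\<exists>u\<ge>1. \<forall>p\<in>Q w. p ^ 1 dvd u + (if p \<in> q ` X then fst (cross p) else fst (z p))"
    by (rule chinese_remainder_prime_powers) (use Q in auto)
  then obtain u where u: "1 \<le> u"
    "\<forall>p\<in>Q w. p ^ 1 dvd u + (if p \<in> q ` X then fst (cross p) else fst (z p))"
    by blast
  have "\<exists>v\<ge>1. \<forall>p\<in>Q (u + w).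
      p ^ b dvd v + (if p \<in> q ` X then snd (cross p) else if p \<le> w then snd (z p) else 0)"
    by (rule chinese_remainder_prime_powers) (use Q in auto)
  then obtain v where v: "1 \<le> v" "\<forall>p\<in>Q (u + w).
      p ^ b dvd v + (if p \<in> q ` X then snd (cross p) else if p \<le> w then snd (z p) else 0)"
    by blast
  show thesis
  proof (rule that[OF u(1) v(1)])
    fix x
    assume "x \<in> X"
    then have "q x \<in> q ` X" "q x \<in> Q w" "q x \<in> Q (u + w)" "cross (q x) = x"
      using \<open>inj_on q X\<close> by (simp_all add: Q_def cross_def)
    then show "q x dvd u + fst x \<and> q x ^ b dvd v + snd x"
      using bspec[OF u(2) \<open>q x \<in> Q w\<close>] bspec[OF v(2) \<open>q x \<in> Q (u + w)\<close>] by simp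
  next
    fix p
    assume "prime p" "p \<le> w"
    moreover have "p \<notin> q ` X"
      using q \<open>p \<le> w\<close> by fastforce
    ultimately have "p \<in> Q w" "p \<in> Q (u + w)" "p \<notin> q ` X"
      by (simp_all add: Q_def)
    then show "p dvd u + fst (z p) \<and> p ^ b dvd v + snd (z p)"
      using bspec[OF u(2) \<open>p \<in> Q w\<close>] bspec[OF v(2) \<open>p \<in> Q (u + w)\<close>] \<open>p \<le> w\<close> by simp
  next
    fix p
    assume "prime p" "w < p" "p \<le> u + w" "p \<notin> q ` X"
    then have "p \<in> Q (u + w)"
      by (simp add: Q_def)
    then show "p ^ b dvd v"
      using bspec[OF v(2) \<open>p \<in> Q (u + w)\<close>] \<open>w < p\<close> \<open>p \<notin> q ` X\<close> by simp
  qed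
qed

(* A prime divisor of u + r is at most u + w, so the three kinds of primes in the
   hypotheses exhaust all candidates. *)
lemma prime_divisor_of_shifted_box_point:
  fixes X :: "(nat \<times> nat) set" and q :: "nat \<times> nat \<Rightarrow> nat" and z :: "nat \<Rightarrow> nat \<times> nat"
  assumes "1 \<le> b" and X: "X \<subseteq> {1..w} \<times> {1..w ^ b}" and rs: "(r, s) \<in> {1..w} \<times> {1..w ^ b} - X"
    and cross_dvd: "\<And>x. x \<in> X \<Longrightarrow> w < q x \<and> q x dvd u + fst x \<and> q x ^ b dvd v + snd x"
    and small_dvd: "\<And>p. prime p \<Longrightarrow> p \<le> w \<Longrightarrow> p dvd u + fst (z p) \<and> p ^ b dvd v + snd (z p)"
    and large_dvd: "\<And>p. prime p \<Longrightarrow> w < p \<Longrightarrow> p \<le> u + w \<Longrightarrow> p \<notin> q ` X \<Longrightarrow> p ^ b dvd v"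
    and "prime p" and dvd_u: "p dvd u + r" and dvd_v: "p ^ b dvd v + s"
  shows "p \<le> w \<and> residue_pair b p (r, s) = residue_pair b p (z p)"
proof -
  have r: "1 \<le> r" "r \<le> w" and s: "1 \<le> s" "s \<le> w ^ b"
    using rs by auto
  consider (cross) x where "x \<in> X" "p = q x" | (small) "p \<le> w"
    | (large) "p \<notin> q ` X" "w < p"
    by (meson imageE not_le)
  then show ?thesis
  proof cases
    case cross
    obtain r' s' where x: "x = (r', s')"
      by fastforce
    have "w < p" "p dvd u + r'" "p ^ b dvd v + s'"
      using cross_dvd[OF \<open>x \<in> X\<close>] cross x by auto
    then have "residue_pair b p (r, s) = residue_pair b p x"
      using residue_pair_eq_if_dvd_add[OF dvd_u _ dvd_v] x by simp
    moreover have "(r, s) \<in> {..w} \<times> {..w ^ b}" "x \<in> {..w} \<times> {..w ^ b}"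
      using rs X \<open>x \<in> X\<close> by auto
    ultimately have "(r, s) = x"
      using inj_on_residue_pair[OF \<open>1 \<le> b\<close> \<open>w < p\<close>] by (meson inj_onD)
    with rs \<open>x \<in> X\<close> show ?thesis
      by simp
  next
    case small
    then have "p dvd u + fst (z p)" "p ^ b dvd v + snd (z p)"
      using small_dvd[OF \<open>prime p\<close>] by auto
    then have "residue_pair b p (r, s) = residue_pair b p (fst (z p), snd (z p))"
      by (rule residue_pair_eq_if_dvd_add[OF dvd_u _ dvd_v])
    with small show ?thesis
      by simp
  next
    case large
    moreover have "p \<le> u + w"
      using dvd_imp_le[OF dvd_u] r by linarith
    ultimately have "p ^ b dvd v + 0"
      using large_dvd[OF \<open>prime p\<close>] by simp
    then have "s mod p ^ b = 0"
      using mod_eq_if_dvd_add[OF dvd_v, of 0] by simp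
    moreover have "s < p ^ b"
      using \<open>s \<le> w ^ b\<close> \<open>w < p\<close> \<open>1 \<le> b\<close> power_strict_mono[of w p b] by simp
    ultimately show ?thesis
      using \<open>1 \<le> s\<close> by simp
  qed
qed

lemma not_covers_residues_if_realizable:
  assumes "realizable b P" and "prime p"
  shows "\<not> covers_residues b p (circles P)"
proof
  obtain u v where "1 \<le> u" and visible: "\<forall>(r, s)\<in>circles P. b_visible b (u + r, v + s)"
    using assms(1) by (auto simp: realizable_def Lat_def)
  assume covers: "covers_residues b p (circles P)"
  have "0 < p"
    using assms(2) prime_gt_0_nat by blast
  then have "((p - 1) * u mod p, (p ^ b - 1) * v mod p ^ b) \<in> {0..<p} \<times> {0..<p ^ b}"
    by simp
  with covers have "((p - 1) * u mod p, (p ^ b - 1) * v mod p ^ b) \<in> residue_pair b p ` circles P"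
    unfolding covers_residues_def by (rule subsetD)
  then obtain r s where "(r, s) \<in> circles P"
    and "r mod p = (p - 1) * u mod p" and "s mod p ^ b = (p ^ b - 1) * v mod p ^ b"
    by (auto elim!: imageE)
  then have "p dvd u + r" "p ^ b dvd v + s"
    using \<open>0 < p\<close> by (simp_all add: dvd_add_if_cong_minus cong_def)
  moreover have "0 < u + r"
    using \<open>1 \<le> u\<close> by simp
  ultimately have "b_invisible b (u + r, v + s)"
    using assms(2) by (simp add: b_invisible_iff_prime_dvd) blast
  then show False
    using visible \<open>(r, s) \<in> circles P\<close> by (auto simp: b_invisible_def)
qed

lemma realizable_if_not_covers_residues:
  assumes "1 \<le> b" and "is_b_pattern b w P"
    and "\<And>p. prime p \<Longrightarrow> \<not> covers_residues b p (circles P)"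
  shows "realizable b P"
proof -
  have "\<exists>z. prime p \<longrightarrow> z \<in> {0..<p} \<times> {0..<p ^ b} \<and> z \<notin> residue_pair b p ` circles P" for p
    using assms(3) unfolding covers_residues_def by (meson subsetI)
  then obtain z where z: "\<And>p. prime p \<Longrightarrow>
      z p \<in> {0..<p} \<times> {0..<p ^ b} \<and> z p \<notin> residue_pair b p ` circles P"
    by metis
  have box: "circles P \<union> crosses P \<subseteq> {1..w} \<times> {1..w ^ b}"
    using pattern_marks_subset_box[OF assms(2)] .
  then have crosses_box: "crosses P \<subseteq> {1..w} \<times> {1..w ^ b}"
    by blast
  then have "finite (crosses P)"
    by (rule finite_subset) simp
  moreover have "infinite ({p. prime p} - {..w})"
    using primes_infinite by simp
  ultimately obtain q where q: "q ` crosses P \<subseteq> {p. prime p} - {..w}" "inj_on q (crosses P)"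
    using finite_inj_into_infinite by blast
  then have q_prime: "\<And>x. x \<in> crosses P \<Longrightarrow> prime (q x) \<and> w < q x"
    by auto
  obtain u v where "1 \<le> u" "1 \<le> v"
    and cross: "\<And>x. x \<in> crosses P \<Longrightarrow> q x dvd u + fst x \<and> q x ^ b dvd v + snd x"
    and small: "\<And>p. prime p \<Longrightarrow> p \<le> w \<Longrightarrow> p dvd u + fst (z p) \<and> p ^ b dvd v + snd (z p)"
    and large: "\<And>p. prime p \<Longrightarrow> w < p \<Longrightarrow> p \<le> u + w \<Longrightarrow> p \<notin> q ` crosses P \<Longrightarrow> p ^ b dvd v"
    using ex_shift_solving_congruences[OF \<open>finite (crosses P)\<close> q(2) q_prime, where z = z and b = b]
    by blast
  have visible: "b_visible b (u + r, v + s)" if "(r, s) \<in> circles P" for r s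
  proof (rule ccontr)
    have "0 < u + r"
      using \<open>1 \<le> u\<close> by simp
    moreover assume "\<not> b_visible b (u + r, v + s)"
    ultimately obtain p where "prime p" "p dvd u + r" "p ^ b dvd v + s"
      using b_invisible_iff_prime_dvd[of "u + r" b "v + s"] by (auto simp: b_invisible_def)
    moreover have "(r, s) \<in> {1..w} \<times> {1..w ^ b} - crosses P"
      using that box by (auto simp: circles_def crosses_def)
    moreover have "\<And>x. x \<in> crosses P \<Longrightarrow> w < q x \<and> q x dvd u + fst x \<and> q x ^ b dvd v + snd x"
      using q(1) cross by auto
    ultimately have "residue_pair b p (r, s) = residue_pair b p (z p)"
      using prime_divisor_of_shifted_box_point[OF assms(1) crosses_box _ _ small large] by blast
    also have "\<dots> = z p"
      using z[OF \<open>prime p\<close>] by (cases "z p") simp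
    finally have "z p \<in> residue_pair b p ` circles P"
      using that by (metis image_eqI)
    then show False
      using z[OF \<open>prime p\<close>] by blast
  qed
  have invisible: "b_invisible b (u + r, v + s)" if "(r, s) \<in> crosses P" for r s
  proof -
    have "prime (q (r, s))" "q (r, s) dvd u + r" "q (r, s) ^ b dvd v + s"
      using that q(1) cross by auto
    moreover have "0 < u + r"
      using \<open>1 \<le> u\<close> by simp
    ultimately show ?thesis
      by (simp add: b_invisible_iff_prime_dvd) blast
  qed
  show ?thesis
    unfolding realizable_def Lat_def
  proof (intro exI conjI)
    show "(u, v) \<in> {(r, s). 1 \<le> r \<and> 1 \<le> s}"
      using \<open>1 \<le> u\<close> \<open>1 \<le> v\<close> by simp
    show "\<forall>(r, s)\<in>circles P. b_visible b (u + r, v + s)"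
      using visible by auto
    show "\<forall>(r, s)\<in>crosses P. b_invisible b (u + r, v + s)"
      using invisible by auto
  qed
qed

theorem mainTheorem4:
  fixes b w :: nat and P :: "nat \<times> nat \<Rightarrow> mark option"
  assumes "1 \<le> b" and "is_b_pattern b w P"
  shows "realizable b P \<longleftrightarrow>
    (\<forall>p::nat. prime p \<longrightarrow> \<not> (\<exists>S. S \<subseteq> circles P \<and> complete_rectangle b p S))"
proof -
  have "circles P \<subseteq> Lat"
    using pattern_marks_subset_box[OF assms(2)] by (auto simp: Lat_def)
  then show ?thesis
    unfolding ex_complete_rectangle_iff_covers_residues[OF \<open>circles P \<subseteq> Lat\<close>]
    using not_covers_residues_if_realizable realizable_if_not_covers_residues[OF assms] by blast
qed

end
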